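(* Let $z_1(t),\dots,z_4(t)$ solve the system of Theorem 5.2 and let $u(t)>0$ satisfy $\dot u=2\big(|z_1|^2+|z_2|^2+|z_3|^2+|z_4|^2\big)u$. Then each of the quantities $$|z_1|^2-|z_2|^2+|z_3|^2-|z_4|^2,\quad z_1\bar z_2+z_3\bar z_4,\quad \mathrm{Re}(z_1z_4-z_2z_3),\quad z_1\bar z_3+z_2\bar z_4$$ is a constant multiple of $u$; the quantity $Q(z_1,z_2,z_3,z_4)$ is a constant multiple of $u^2$; and $\mathrm{Im}(z_1z_4-z_2z_3)$ satisfies $\frac{d}{dt}\mathrm{Im}(z_1z_4-z_2z_3)=-2\big(\sum_j|z_j|^2\big)\mathrm{Im}(z_1z_4-z_2z_3)$, hence is a constant multiple of $u^{-1}$.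
   Context: The system of Theorem 5.2 is: $\dot z_1=z_1(|z_1|^2+|z_2|^2+|z_3|^2-|z_4|^2)+2(\overline{z_1z_4-z_2z_3}+z_2z_3)\bar z_4$, $\dot z_2=z_2(|z_4|^2+|z_1|^2+|z_2|^2-|z_3|^2)-2(\overline{z_1z_4-z_2z_3}-z_1z_4)\bar z_3$, $\dot z_3=z_3(|z_3|^2+|z_4|^2+|z_1|^2-|z_2|^2)-2(\overline{z_1z_4-z_2z_3}-z_1z_4)\bar z_2$, $\dot z_4=z_4(|z_2|^2+|z_3|^2+|z_4|^2-|z_1|^2)+2(\overline{z_1z_4-z_2z_3}+z_2z_3)\bar z_1$. Define $Q(z_1,z_2,z_3,z_4)=(|z_1|^2-|z_2|^2+|z_3|^2-|z_4|^2)^2+4|z_1\bar z_2+z_3\bar z_4|^2=(|z_1|^2+|z_2|^2)^2+(|z_3|^2+|z_4|^2)^2+2|z_1\bar z_3+z_2\bar z_4|^2-2|z_1z_4-z_2z_3|^2$. *)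

theory Defs
  imports "HOL-Analysis.Analysis"
begin

abbreviation sqn :: "complex \<Rightarrow> real" where "sqn z \<equiv> (cmod z)\<^sup>2"

text \<open>Right-hand sides of the system of Theorem 5.2.\<close>
definition F1 :: "complex \<Rightarrow> complex \<Rightarrow> complex \<Rightarrow> complex \<Rightarrow> complex" where
  "F1 z1 z2 z3 z4 = z1 * complex_of_real (sqn z1 + sqn z2 + sqn z3 - sqn z4)
     + 2 * (cnj (z1*z4 - z2*z3) + z2*z3) * cnj z4"

definition F2 :: "complex \<Rightarrow> complex \<Rightarrow> complex \<Rightarrow> complex \<Rightarrow> complex" where
  "F2 z1 z2 z3 z4 = z2 * complex_of_real (sqn z4 + sqn z1 + sqn z2 - sqn z3)
     - 2 * (cnj (z1*z4 - z2*z3) - z1*z4) * cnj z3"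

definition F3 :: "complex \<Rightarrow> complex \<Rightarrow> complex \<Rightarrow> complex \<Rightarrow> complex" where
  "F3 z1 z2 z3 z4 = z3 * complex_of_real (sqn z3 + sqn z4 + sqn z1 - sqn z2)
     - 2 * (cnj (z1*z4 - z2*z3) - z1*z4) * cnj z2"

definition F4 :: "complex \<Rightarrow> complex \<Rightarrow> complex \<Rightarrow> complex \<Rightarrow> complex" where
  "F4 z1 z2 z3 z4 = z4 * complex_of_real (sqn z2 + sqn z3 + sqn z4 - sqn z1)
     + 2 * (cnj (z1*z4 - z2*z3) + z2*z3) * cnj z1"

text \<open>The quantity Q (first of the two given equal expressions).\<close>
definition Q :: "complex \<Rightarrow> complex \<Rightarrow> complex \<Rightarrow> complex \<Rightarrow> real" where
  "Q z1 z2 z3 z4 = (sqn z1 - sqn z2 + sqn z3 - sqn z4)\<^sup>2 + 4 * sqn (z1 * cnj z2 + z3 * cnj z4)"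

end

theory Submission
  imports Defs
begin

text \<open>Read the solution as the matrix Z with rows (z1, z2) and (z3, z4) and put k = 2|Z|^2, so
  that u' = k u. The off-diagonal entries of Z*Z and Z Z* and the difference of the diagonal
  entries of Z*Z satisfy y' = k y, while (det Z)' = k conj (det Z); so Re det Z solves y' = k y
  and Im det Z solves y' = -k y, which is also solved by 1/u. A solution of a scalar linear equation
  is proportional to any nowhere-vanishing one (their quotient has derivative zero), giving the
  constant multiples of u and 1/u. Finally Q = N^2 + 4|A|^2, where N is the diagonal difference
  and A the off-diagonal entry of Z*Z, is a multiple of u^2.\<close>

lemma DERIV_inverse_linear_ode:
  assumes "(u has_real_derivative k * u t) (at t)" "u t \<noteq> 0"
  shows "((\<lambda>s. inverse (u s)) has_real_derivative - k * inverse (u t)) (at t)"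
  using DERIV_inverse_fun[OF assms] \<open>u t \<noteq> 0\<close> by (simp add: power2_eq_square field_simps)

lemma linear_ode_solutions_proportional:
  fixes y :: "real \<Rightarrow> 'a::real_normed_vector" and u k :: "real \<Rightarrow> real"
  assumes "convex T"
    and dy: "\<And>t. t \<in> T \<Longrightarrow> (y has_vector_derivative k t *\<^sub>R y t) (at t)"
    and du: "\<And>t. t \<in> T \<Longrightarrow> (u has_real_derivative k t * u t) (at t)"
    and u_nz: "\<And>t. t \<in> T \<Longrightarrow> u t \<noteq> 0"
  shows "\<exists>c. \<forall>t\<in>T. y t = u t *\<^sub>R c"
proof -
  have "((\<lambda>s. inverse (u s) *\<^sub>R y s) has_vector_derivative 0) (at t within T)" if t: "t \<in> T" for t
    using has_vector_derivative_scaleR[OF DERIV_inverse_linear_ode[OF du[OF t] u_nz[OF t]] dy[OF t]]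
    by (auto intro: has_vector_derivative_at_within simp: algebra_simps)
  then obtain c where "\<And>t. t \<in> T \<Longrightarrow> inverse (u t) *\<^sub>R y t = c"
    using has_vector_derivative_zero_constant[OF \<open>convex T\<close>] by blast
  then show ?thesis
    using u_nz by (metis scaleR_scaleR right_inverse scaleR_one)
qed

lemma linear_ode_solutions_proportional_real:
  fixes y u k :: "real \<Rightarrow> real"
  assumes "convex T"
    and "\<And>t. t \<in> T \<Longrightarrow> (y has_real_derivative k t * y t) (at t)"
    and "\<And>t. t \<in> T \<Longrightarrow> (u has_real_derivative k t * u t) (at t)"
    and "\<And>t. t \<in> T \<Longrightarrow> u t \<noteq> 0"
  shows "\<exists>c. \<forall>t\<in>T. y t = c * u t"
  using linear_ode_solutions_proportional[of T y k u] assms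
  by (simp add: has_real_derivative_iff_has_vector_derivative mult.commute)

definition growth_rate :: "complex \<Rightarrow> complex \<Rightarrow> complex \<Rightarrow> complex \<Rightarrow> real" where
  "growth_rate z1 z2 z3 z4 = 2 * (sqn z1 + sqn z2 + sqn z3 + sqn z4)"

lemma col_gram_offdiag_along_F:
  "(z1 * cnj (F2 z1 z2 z3 z4) + F1 z1 z2 z3 z4 * cnj z2) + (z3 * cnj (F4 z1 z2 z3 z4) + F3 z1 z2 z3 z4 * cnj z4)
   = growth_rate z1 z2 z3 z4 *\<^sub>R (z1 * cnj z2 + z3 * cnj z4)"
  unfolding F1_def F2_def F3_def F4_def growth_rate_def scaleR_conv_of_real cmod_power2
  by (simp add: complex_eq_iff) algebra

lemma row_gram_offdiag_along_F:
  "(z1 * cnj (F3 z1 z2 z3 z4) + F1 z1 z2 z3 z4 * cnj z3) + (z2 * cnj (F4 z1 z2 z3 z4) + F2 z1 z2 z3 z4 * cnj z4)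
   = growth_rate z1 z2 z3 z4 *\<^sub>R (z1 * cnj z3 + z2 * cnj z4)"
  unfolding F1_def F2_def F3_def F4_def growth_rate_def scaleR_conv_of_real cmod_power2
  by (simp add: complex_eq_iff) algebra

lemma col_norm_diff_along_F:
  "(z1 * cnj (F1 z1 z2 z3 z4) + F1 z1 z2 z3 z4 * cnj z1) - (z2 * cnj (F2 z1 z2 z3 z4) + F2 z1 z2 z3 z4 * cnj z2)
   + (z3 * cnj (F3 z1 z2 z3 z4) + F3 z1 z2 z3 z4 * cnj z3) - (z4 * cnj (F4 z1 z2 z3 z4) + F4 z1 z2 z3 z4 * cnj z4)
   = growth_rate z1 z2 z3 z4 *\<^sub>R (z1 * cnj z1 - z2 * cnj z2 + z3 * cnj z3 - z4 * cnj z4)"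
  unfolding F1_def F2_def F3_def F4_def growth_rate_def scaleR_conv_of_real cmod_power2
  by (simp add: complex_eq_iff) algebra

lemma det_along_F:
  "(z1 * F4 z1 z2 z3 z4 + F1 z1 z2 z3 z4 * z4) - (z2 * F3 z1 z2 z3 z4 + F2 z1 z2 z3 z4 * z3)
   = growth_rate z1 z2 z3 z4 *\<^sub>R cnj (z1 * z4 - z2 * z3)"
  unfolding F1_def F2_def F3_def F4_def growth_rate_def scaleR_conv_of_real cmod_power2
  by (simp add: complex_eq_iff) algebra

context
  fixes z1 z2 z3 z4 :: "real \<Rightarrow> complex" and t :: real
  assumes d1: "(z1 has_vector_derivative F1 (z1 t) (z2 t) (z3 t) (z4 t)) (at t)"
    and d2: "(z2 has_vector_derivative F2 (z1 t) (z2 t) (z3 t) (z4 t)) (at t)"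
    and d3: "(z3 has_vector_derivative F3 (z1 t) (z2 t) (z3 t) (z4 t)) (at t)"
    and d4: "(z4 has_vector_derivative F4 (z1 t) (z2 t) (z3 t) (z4 t)) (at t)"
begin

lemma col_gram_offdiag_has_derivative:
  "((\<lambda>s. z1 s * cnj (z2 s) + z3 s * cnj (z4 s)) has_vector_derivative
     growth_rate (z1 t) (z2 t) (z3 t) (z4 t) *\<^sub>R (z1 t * cnj (z2 t) + z3 t * cnj (z4 t))) (at t)"
  using has_vector_derivative_add[OF
      has_vector_derivative_mult[OF d1 has_vector_derivative_cnj[OF d2]]
      has_vector_derivative_mult[OF d3 has_vector_derivative_cnj[OF d4]]]
  by (simp only: col_gram_offdiag_along_F)

lemma row_gram_offdiag_has_derivative:
  "((\<lambda>s. z1 s * cnj (z3 s) + z2 s * cnj (z4 s)) has_vector_derivative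
     growth_rate (z1 t) (z2 t) (z3 t) (z4 t) *\<^sub>R (z1 t * cnj (z3 t) + z2 t * cnj (z4 t))) (at t)"
  using has_vector_derivative_add[OF
      has_vector_derivative_mult[OF d1 has_vector_derivative_cnj[OF d3]]
      has_vector_derivative_mult[OF d2 has_vector_derivative_cnj[OF d4]]]
  by (simp only: row_gram_offdiag_along_F)

lemma col_norm_diff_has_derivative:
  "((\<lambda>s. sqn (z1 s) - sqn (z2 s) + sqn (z3 s) - sqn (z4 s)) has_real_derivative
     growth_rate (z1 t) (z2 t) (z3 t) (z4 t) * (sqn (z1 t) - sqn (z2 t) + sqn (z3 t) - sqn (z4 t))) (at t)"
proof -
  have "((\<lambda>s. z1 s * cnj (z1 s) - z2 s * cnj (z2 s) + z3 s * cnj (z3 s) - z4 s * cnj (z4 s))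
      has_vector_derivative growth_rate (z1 t) (z2 t) (z3 t) (z4 t) *\<^sub>R
        (z1 t * cnj (z1 t) - z2 t * cnj (z2 t) + z3 t * cnj (z3 t) - z4 t * cnj (z4 t))) (at t)"
    using has_vector_derivative_diff[OF has_vector_derivative_add[OF has_vector_derivative_diff[OF
        has_vector_derivative_mult[OF d1 has_vector_derivative_cnj[OF d1]]
        has_vector_derivative_mult[OF d2 has_vector_derivative_cnj[OF d2]]]
        has_vector_derivative_mult[OF d3 has_vector_derivative_cnj[OF d3]]]
        has_vector_derivative_mult[OF d4 has_vector_derivative_cnj[OF d4]]]
    by (simp only: col_norm_diff_along_F)
  then show ?thesis
    unfolding has_vector_derivative_complex_iff
    by (simp add: complex_mult_cnj cmod_power2 del: complex_In_mult_cnj_zero)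
qed

lemma det_has_derivative:
  "((\<lambda>s. z1 s * z4 s - z2 s * z3 s) has_vector_derivative
     growth_rate (z1 t) (z2 t) (z3 t) (z4 t) *\<^sub>R cnj (z1 t * z4 t - z2 t * z3 t)) (at t)"
  using has_vector_derivative_diff[OF has_vector_derivative_mult[OF d1 d4] has_vector_derivative_mult[OF d2 d3]]
  by (simp only: det_along_F)

lemma Re_det_has_derivative:
  "((\<lambda>s. Re (z1 s * z4 s - z2 s * z3 s)) has_real_derivative
     growth_rate (z1 t) (z2 t) (z3 t) (z4 t) * Re (z1 t * z4 t - z2 t * z3 t)) (at t)"
  using det_has_derivative unfolding has_vector_derivative_complex_iff by simp

lemma Im_det_has_derivative:
  "((\<lambda>s. Im (z1 s * z4 s - z2 s * z3 s)) has_real_derivative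
     - growth_rate (z1 t) (z2 t) (z3 t) (z4 t) * Im (z1 t * z4 t - z2 t * z3 t)) (at t)"
  using det_has_derivative unfolding has_vector_derivative_complex_iff by (simp add: algebra_simps)

end

theorem mainTheorem9:
  fixes T :: "real set" and z1 z2 z3 z4 :: "real \<Rightarrow> complex" and u :: "real \<Rightarrow> real"
  assumes T: "open T" "is_interval T"
    and d1: "\<And>t. t \<in> T \<Longrightarrow> (z1 has_vector_derivative F1 (z1 t) (z2 t) (z3 t) (z4 t)) (at t)"
    and d2: "\<And>t. t \<in> T \<Longrightarrow> (z2 has_vector_derivative F2 (z1 t) (z2 t) (z3 t) (z4 t)) (at t)"
    and d3: "\<And>t. t \<in> T \<Longrightarrow> (z3 has_vector_derivative F3 (z1 t) (z2 t) (z3 t) (z4 t)) (at t)"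
    and d4: "\<And>t. t \<in> T \<Longrightarrow> (z4 has_vector_derivative F4 (z1 t) (z2 t) (z3 t) (z4 t)) (at t)"
    and upos: "\<And>t. t \<in> T \<Longrightarrow> u t > 0"
    and du: "\<And>t. t \<in> T \<Longrightarrow>
       (u has_real_derivative 2 * (sqn (z1 t) + sqn (z2 t) + sqn (z3 t) + sqn (z4 t)) * u t) (at t)"
  shows "(\<exists>c::real. \<forall>t\<in>T. sqn (z1 t) - sqn (z2 t) + sqn (z3 t) - sqn (z4 t) = c * u t)
       \<and> (\<exists>c::complex. \<forall>t\<in>T. z1 t * cnj (z2 t) + z3 t * cnj (z4 t) = c * complex_of_real (u t))
       \<and> (\<exists>c::real. \<forall>t\<in>T. Re (z1 t * z4 t - z2 t * z3 t) = c * u t)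
       \<and> (\<exists>c::complex. \<forall>t\<in>T. z1 t * cnj (z3 t) + z2 t * cnj (z4 t) = c * complex_of_real (u t))
       \<and> (\<exists>c::real. \<forall>t\<in>T. Q (z1 t) (z2 t) (z3 t) (z4 t) = c * (u t)\<^sup>2)
       \<and> (\<forall>t\<in>T. ((\<lambda>s. Im (z1 s * z4 s - z2 s * z3 s)) has_real_derivative
              - 2 * (sqn (z1 t) + sqn (z2 t) + sqn (z3 t) + sqn (z4 t)) * Im (z1 t * z4 t - z2 t * z3 t)) (at t))
       \<and> (\<exists>c::real. \<forall>t\<in>T. Im (z1 t * z4 t - z2 t * z3 t) = c / u t)"
proof -
  have "convex T" using T(2) is_interval_convex_1 by blast
  have u_nz: "\<And>t. t \<in> T \<Longrightarrow> u t \<noteq> 0" using upos by force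
  have du: "\<And>t. t \<in> T \<Longrightarrow> (u has_real_derivative growth_rate (z1 t) (z2 t) (z3 t) (z4 t) * u t) (at t)"
    using du by (simp add: growth_rate_def)
  note proportional = linear_ode_solutions_proportional[OF \<open>convex T\<close> _ du u_nz]
  note proportional_real = linear_ode_solutions_proportional_real[OF \<open>convex T\<close> _ du u_nz]
  obtain cN where cN: "\<forall>t\<in>T. sqn (z1 t) - sqn (z2 t) + sqn (z3 t) - sqn (z4 t) = cN * u t"
    using proportional_real[OF col_norm_diff_has_derivative[OF d1 d2 d3 d4]] by blast
  obtain cA where cA: "\<forall>t\<in>T. z1 t * cnj (z2 t) + z3 t * cnj (z4 t) = u t *\<^sub>R cA"
    using proportional[OF col_gram_offdiag_has_derivative[OF d1 d2 d3 d4]] by blast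
  obtain cB where cB: "\<forall>t\<in>T. z1 t * cnj (z3 t) + z2 t * cnj (z4 t) = u t *\<^sub>R cB"
    using proportional[OF row_gram_offdiag_has_derivative[OF d1 d2 d3 d4]] by blast
  obtain cR where cR: "\<forall>t\<in>T. Re (z1 t * z4 t - z2 t * z3 t) = cR * u t"
    using proportional_real[OF Re_det_has_derivative[OF d1 d2 d3 d4]] by blast
  obtain cI where cI: "\<forall>t\<in>T. Im (z1 t * z4 t - z2 t * z3 t) = cI * inverse (u t)"
    using linear_ode_solutions_proportional_real[OF \<open>convex T\<close> Im_det_has_derivative[OF d1 d2 d3 d4]
        DERIV_inverse_linear_ode[OF du u_nz]]
    by (meson inverse_nonzero_iff_nonzero u_nz)
  have "\<forall>t\<in>T. Q (z1 t) (z2 t) (z3 t) (z4 t) = (cN\<^sup>2 + 4 * (cmod cA)\<^sup>2) * (u t)\<^sup>2"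
    using cN cA by (simp add: Q_def algebra_simps power_mult_distrib)
  then show ?thesis
    using cN cA cB cR cI Im_det_has_derivative[OF d1 d2 d3 d4]
    by (intro conjI; (intro exI)?) (auto simp: growth_rate_def scaleR_conv_of_real mult.commute divide_inverse)
qed

end
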